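(* Let $X$ be a positive random variable with $\mathbb E[X]<\infty$, and let $h>0$ satisfy $0<\mathbb P(X>h)<1$. Define $$\kappa_h=\frac{\mathbb E[X\mathbf 1_{X>h}]}{\mathbb E[X]}=\frac{\mathbb P(X>h)\,\mathbb E[X\mid X>h]}{\mathbb E[X]},$$ and, for $n\in\mathbb N$, $n\ge1$, and $X_1,X_2,\dots$ i.i.d. copies of $X$, $$\widehat\kappa_h(n)=\frac{\sum_{i=1}^n \mathbf 1_{X_i>h}X_i}{\sum_{i=1}^n X_i}.$$ Then for every $n\ge 1$, $$\mathbb E\big[\widehat\kappa_h(n)\big]<\kappa_h,$$ and $\widehat\kappa_h(n)\to\kappa_h$ almost surely and in probability as $n\to\infty$.
   Context: $\mathbf 1_{E}$ denotes the indicator of the event $E$. The threshold $h$ is fixed (not estimated from the sample). *)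

theory Defs
  imports "HOL-Probability.Probability"
begin

definition kappa :: "'a measure \<Rightarrow> ('a \<Rightarrow> real) \<Rightarrow> real \<Rightarrow> real" where
  "kappa M Y h = (\<integral>x. Y x * indicator {x\<in>space M. Y x > h} x \<partial>M) / (\<integral>x. Y x \<partial>M)"

definition kappa_hat :: "(nat \<Rightarrow> 'a \<Rightarrow> real) \<Rightarrow> real \<Rightarrow> nat \<Rightarrow> 'a \<Rightarrow> real" where
  "kappa_hat X h n \<omega> =
     (\<Sum>i=1..n. (if X i \<omega> > h then 1 else 0) * X i \<omega>) / (\<Sum>i=1..n. X i \<omega>)"

end

theory Submission
  imports Defs
begin

text \<open>
  Put \<open>q = \<kappa>\<^sub>h\<close> and \<open>c(w) = w (1\<^sub>{w > h} - q)\<close>, so that \<open>E[c(X\<^sub>i)] = 0\<close> and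
  \<open>\<kappa>\<^sub>h(n) = q + \<Sum>\<^sub>i c(X\<^sub>i) / S\<close> with \<open>S = \<Sum>\<^sub>j X\<^sub>j\<close>.  Replacing \<open>S\<close> by \<open>h + S\<^sub>-\<^sub>i\<close>, where
  \<open>S\<^sub>-\<^sub>i = \<Sum>\<^sub>j\<^sub>\<noteq>\<^sub>i X\<^sub>j\<close> is independent of \<open>X\<^sub>i\<close>, can only increase each term, strictly on the event
  \<open>X\<^sub>i > h\<close> of positive probability; and \<open>E[c(X\<^sub>i) / (h + S\<^sub>-\<^sub>i)] = E[c(X\<^sub>i)] E[1/(h + S\<^sub>-\<^sub>i)] = 0\<close>.
  Hence \<open>E[c(X\<^sub>i)/S] < 0\<close> for every \<open>i\<close> and \<open>E[\<kappa>\<^sub>h(n)] < \<kappa>\<^sub>h\<close>.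

  Consistency.  \<open>\<kappa>\<^sub>h(n)\<close> is the ratio of the sample means of \<open>X 1\<^sub>{X > h}\<close> and of \<open>X\<close>, so the
  strong law of large numbers gives almost sure convergence, and dominated convergence turns it
  into convergence in probability.  The strong law is not in the library; it is proved here for
  nonnegative i.i.d. variables by Etemadi's argument: truncation, Chebyshev's inequality along the
  lacunary sequences \<open>\<lfloor>a^n\<rfloor>\<close>, Borel--Cantelli, and interpolation between consecutive terms.
\<close>

section \<open>Averages of monotone sequences along lacunary subsequences\<close>

lemma power_threshold:
  fixes a w :: real assumes a: "a > 1"
  obtains L where "\<And>n. w \<le> a^n \<longleftrightarrow> L \<le> n"
proof -
  obtain M where M: "w \<le> a^M" using real_arch_pow[OF a, of w] less_imp_le by blast
  define L where "L = (LEAST m. w \<le> a^m)"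
  have L1: "w \<le> a^L" using LeastI[of "\<lambda>m. w \<le> a^m", OF M] L_def by simp
  have L2: "a^m < w" if "m < L" for m using not_less_Least[of m "\<lambda>m. w\<le>a^m"] L_def that by auto
  have ge: "w \<le> a^n" if "L \<le> n" for n using L1 power_increasing[OF that, of a] a by linarith
  have "w \<le> a^n \<longleftrightarrow> L \<le> n" for n using L2[of n] ge[of n] by (cases "n < L") auto
  then show ?thesis by (rule that)
qed

text \<open>The powers of \<open>a > 1\<close> lying below \<open>w \<ge> 0\<close> sum to at most \<open>a w/(a-1)\<close>:
  the sum is a finite geometric series whose last term is below \<open>w\<close>.\<close>
lemma sum_powers_below:
  fixes a w :: real assumes a: "a > 1" and w: "w \<ge> 0"
  shows "(\<Sum>n<N. if a^n < w then a^n else 0) \<le> a * w / (a - 1)"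
proof -
  obtain L where L: "\<And>n. w \<le> a^n \<longleftrightarrow> L \<le> n" using power_threshold[OF a] by blast
  have "(\<Sum>n<N. if a^n < w then a^n else 0) = (\<Sum>n\<in>{..<N}\<inter>{..<L}. a^n)"
    by (subst sum.inter_restrict) (auto intro!: sum.cong simp: not_le[symmetric] L)
  also have "\<dots> \<le> (\<Sum>n<L. a^n)"
    by (rule sum_mono2) (use a in auto)
  also have "\<dots> = (a^L - 1) / (a - 1)" using a by (simp add: geometric_sum)
  also have "\<dots> \<le> a * w / (a - 1)"
  proof (cases L)
    case (Suc l)
    then have "a^L \<le> a * w" using L[of l] a by simp
    then show ?thesis using a by (intro divide_right_mono) auto
  qed (use a w in simp)
  finally show ?thesis .
qed

lemma geometric_tail_bound:
  fixes r :: real assumes r: "0 \<le> r" "r < 1"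
  shows "(\<Sum>n<N. if L \<le> n then r^n else 0) \<le> r^L / (1 - r)"
proof -
  have "(\<Sum>n<N. if L \<le> n then r^n else 0) = (if N \<le> L then 0 else (r^L - r^N) / (1 - r))"
  proof (induction N)
    case (Suc N)
    then show ?case using r by (cases "N < L") (auto simp: field_simps)
  qed simp
  also have "\<dots> \<le> r^L / (1 - r)" using r by (auto intro!: divide_right_mono)
  finally show ?thesis .
qed

lemma sum_inverse_powers_above:
  fixes a w :: real assumes a: "a > 1" and w: "w > 0"
  shows "(\<Sum>n<N. if w \<le> a^n then 1 / a^n else 0) \<le> a / ((a - 1) * w)"
proof -
  obtain L where L: "\<And>n. w \<le> a^n \<longleftrightarrow> L \<le> n" using power_threshold[OF a] by blast
  have "(\<Sum>n<N. if w \<le> a^n then 1 / a^n else 0) = (\<Sum>n<N. if L \<le> n then (1/a)^n else 0)"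
    by (rule sum.cong) (auto simp: L power_one_over)
  also have "\<dots> \<le> (1/a)^L / (1 - 1/a)" using a by (intro geometric_tail_bound) auto
  also have "\<dots> = a / ((a - 1) * a^L)" using a by (simp add: field_simps power_one_over)
  also have "\<dots> \<le> a / ((a - 1) * w)" using a w L[of L] by (intro divide_left_mono mult_left_mono) auto
  finally show ?thesis .
qed

text \<open>The integer parts \<open>\<lfloor>a^n\<rfloor>\<close> of the powers of \<open>a > 1\<close> form the lacunary sequence along
  which the strong law is first established.\<close>
definition lacunary :: "real \<Rightarrow> nat \<Rightarrow> nat" where
  "lacunary a n = nat \<lfloor>a^n\<rfloor>"

lemma lacunary_bounds:
  fixes a :: real assumes a: "a > 1"
  shows "1 \<le> lacunary a n" "real (lacunary a n) \<le> a^n" "a^n < real (lacunary a n) + 1"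
    "a^n \<le> 2 * real (lacunary a n)"
proof -
  have p: "1 \<le> a^n" using a by simp
  show k1: "1 \<le> lacunary a n" unfolding lacunary_def using p
    by (metis le_nat_floor nat_one_as_int of_nat_1 one_le_floor)
  show "real (lacunary a n) \<le> a^n" unfolding lacunary_def using p by simp
  show lt: "a^n < real (lacunary a n) + 1" unfolding lacunary_def using p by linarith
  show "a^n \<le> 2 * real (lacunary a n)" using lt k1 by linarith
qed

lemma lacunary_mono:
  fixes a :: real assumes a: "a > 1" and "p \<le> q"
  shows "lacunary a p \<le> lacunary a q"
  unfolding lacunary_def using power_increasing[OF assms(2), of a] a
  by (intro nat_mono floor_mono) auto

lemma lacunary_unbounded:
  fixes a :: real assumes a: "a > 1"
  shows "eventually (\<lambda>n. w < real (lacunary a n)) sequentially"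
proof -
  obtain N where N: "w + 1 < a^N" using real_arch_pow[OF a] by blast
  have "w < real (lacunary a n)" if "n \<ge> N" for n
    using N lacunary_bounds(3)[OF a, of n] power_increasing[OF that, of a] a by linarith
  then show ?thesis unfolding eventually_sequentially by blast
qed

lemma lacunary_ratio:
  fixes a :: real assumes a: "a > 1"
  shows "eventually (\<lambda>n. real (lacunary a (Suc n)) \<le> a^2 * lacunary a n) sequentially"
proof -
  obtain N where N: "a / (a - 1) < a^N" using real_arch_pow[OF a] by blast
  have "real (lacunary a (Suc n)) \<le> a^2 * lacunary a n" if n: "n \<ge> N" for n
  proof -
    have "a / (a - 1) \<le> a^n" using N power_increasing[OF n, of a] a by linarith
    then have "a^n \<le> a * (a^n - 1)" using a by (simp add: field_simps)
    also have "\<dots> < a * lacunary a n" using lacunary_bounds(3)[OF a, of n] a by simp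
    finally have "a * a^n \<le> a^2 * lacunary a n" using a by (simp add: power2_eq_square)
    then show ?thesis using lacunary_bounds(2)[OF a, of "Suc n"] by simp
  qed
  then show ?thesis unfolding eventually_sequentially by blast
qed

lemma lacunary_bracket:
  fixes a :: real assumes a: "a > 1" and m: "lacunary a N \<le> m"
  obtains n where "N \<le> n" "lacunary a n \<le> m" "m < lacunary a (Suc n)"
proof -
  obtain p where "real m + 1 < a^p" using real_arch_pow[OF a] by blast
  then have p: "m < lacunary a p" using lacunary_bounds(3)[OF a, of p] by linarith
  define q where "q = (LEAST p. m < lacunary a p)"
  have q: "m < lacunary a q" using LeastI[of "\<lambda>p. m < lacunary a p", OF p] q_def by simp
  have "N < q"
    using q m lacunary_mono[OF a, of q N] by (cases "q \<le> N") auto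
  then obtain n where qn: "q = Suc n" and "N \<le> n" by (cases q) auto
  moreover have "lacunary a n \<le> m"
    using not_less_Least[of n "\<lambda>p. m < lacunary a p"] q_def qn by simp
  ultimately show ?thesis using that q by simp
qed

lemma monotone_average_sandwich:
  fixes S :: "nat \<Rightarrow> real" and c :: real
  assumes mono: "mono S" and nn: "\<And>m. 0 \<le> S m"
    and k: "0 < k" "k \<le> m" "m < k'" and ratio: "real k' \<le> c * k"
  shows "S m / m \<le> c * (S k' / k')" and "(S k / k) / c \<le> S m / m"
proof -
  have kpos: "0 < real k" "0 < real k'" using k by auto
  have c: "0 < c" using ratio kpos by (smt (verit) zero_less_mult_pos2)
  have "S m / m \<le> S k' / k" using k nn monoD[OF mono, of m k'] by (intro frac_le) auto
  also have "\<dots> = (S k' / k') * (k' / k)" using kpos by (simp add: field_simps)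
  also have "\<dots> \<le> (S k' / k') * c" using ratio kpos nn by (intro mult_left_mono) (auto simp: field_simps)
  finally show "S m / m \<le> c * (S k' / k')" by (simp add: mult.commute)
  have "1 / c \<le> k / k'" using ratio kpos c by (simp add: field_simps)
  then have "(S k / k) * (1 / c) \<le> (S k / k) * (k / k')"
    by (rule mult_left_mono) (use nn kpos in simp)
  then have "(S k / k) / c \<le> (S k / k) * (k / k')" by simp
  also have "\<dots> = S k / k'" using kpos by (simp add: field_simps)
  also have "\<dots> \<le> S m / m" using k nn monoD[OF mono, of k m] by (intro frac_le) auto
  finally show "(S k / k) / c \<le> S m / m" .
qed

lemma averages_between_lacunary_bounds:
  fixes S :: "nat \<Rightarrow> real" and a \<mu> d :: real
  assumes mono: "mono S" and nn: "\<And>m. 0 \<le> S m" and a: "a > 1" and d: "d > 0"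
    and lim: "(\<lambda>n. S (lacunary a n) / lacunary a n) \<longlonglongrightarrow> \<mu>"
  shows "eventually (\<lambda>m. S m / m \<le> a^2 * (\<mu> + d) \<and> (\<mu> - d) / a^2 \<le> S m / m) sequentially"
proof -
  let ?k = "lacunary a"
  have "eventually (\<lambda>n. \<bar>S (?k n) / ?k n - \<mu>\<bar> < d \<and> real (?k (Suc n)) \<le> a^2 * ?k n) sequentially"
    using tendstoD[OF lim d] lacunary_ratio[OF a] by eventually_elim (simp add: dist_real_def)
  then obtain N where N: "\<And>n. n \<ge> N \<Longrightarrow> \<bar>S (?k n) / ?k n - \<mu>\<bar> < d \<and> real (?k (Suc n)) \<le> a^2 * ?k n"
    unfolding eventually_sequentially by blast
  have "S m / m \<le> a^2 * (\<mu> + d) \<and> (\<mu> - d) / a^2 \<le> S m / m" if m: "?k N \<le> m" for m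
  proof -
    obtain n where n: "N \<le> n" "?k n \<le> m" "m < ?k (Suc n)" using lacunary_bracket[OF a m] .
    note sandwich = monotone_average_sandwich[OF mono nn _ n(2,3) conjunct2[OF N[OF n(1)]]]
    have k0: "0 < ?k n" using lacunary_bounds(1)[OF a] by (simp add: Suc_le_eq)
    have up: "S (?k (Suc n)) / ?k (Suc n) \<le> \<mu> + d" and lo: "\<mu> - d \<le> S (?k n) / ?k n"
      using N[of n] N[of "Suc n"] n(1) by auto
    have "S m / m \<le> a^2 * (S (?k (Suc n)) / ?k (Suc n))" using sandwich(1)[OF k0] .
    also have "\<dots> \<le> a^2 * (\<mu> + d)" using up by (rule mult_left_mono) simp
    finally have "S m / m \<le> a^2 * (\<mu> + d)" .
    moreover have "(\<mu> - d) / a^2 \<le> (S (?k n) / ?k n) / a^2" using lo by (rule divide_right_mono) simp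
    ultimately show ?thesis using sandwich(2)[OF k0] by linarith
  qed
  then show ?thesis unfolding eventually_sequentially by blast
qed

lemma averages_converge_from_lacunary:
  fixes S :: "nat \<Rightarrow> real" and \<mu> :: real
  assumes mono: "mono S" and nn: "\<And>m. 0 \<le> S m"
    and lim: "\<And>j::nat. (\<lambda>n. S (lacunary (1 + 1/(real j + 1)) n) / lacunary (1 + 1/(real j + 1)) n) \<longlonglongrightarrow> \<mu>"
  shows "(\<lambda>m. S m / m) \<longlonglongrightarrow> \<mu>"
proof (rule tendstoI)
  fix e :: real assume e: "e > 0"
  define \<delta> where "\<delta> j = 1 / (real j + 1)" for j :: nat
  have \<delta>: "\<delta> \<longlonglongrightarrow> 0"
    unfolding \<delta>_def using LIMSEQ_Suc[OF lim_inverse_n'] by (simp add: add.commute)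
  have "(\<lambda>j. (1 + \<delta> j)^2 * (\<mu> + \<delta> j)) \<longlonglongrightarrow> (1 + 0)^2 * (\<mu> + 0)"
    by (intro tendsto_intros \<delta>)
  then have up: "eventually (\<lambda>j. dist ((1 + \<delta> j)^2 * (\<mu> + \<delta> j)) \<mu> < e) sequentially"
    using e by (simp add: tendsto_iff)
  have "(\<lambda>j. (\<mu> - \<delta> j) / (1 + \<delta> j)^2) \<longlonglongrightarrow> (\<mu> - 0) / (1 + 0)^2"
    by (intro tendsto_intros \<delta>) simp
  then have lo: "eventually (\<lambda>j. dist ((\<mu> - \<delta> j) / (1 + \<delta> j)^2) \<mu> < e) sequentially"
    using e by (simp add: tendsto_iff)
  obtain j where j: "dist ((1 + \<delta> j)^2 * (\<mu> + \<delta> j)) \<mu> < e"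
    "dist ((\<mu> - \<delta> j) / (1 + \<delta> j)^2) \<mu> < e"
    using eventually_happens'[OF _ eventually_conj[OF up lo]] by auto
  have "eventually (\<lambda>m. S m / m \<le> (1 + \<delta> j)^2 * (\<mu> + \<delta> j) \<and> (\<mu> - \<delta> j) / (1 + \<delta> j)^2 \<le> S m / m) sequentially"
    using lim[of j] by (intro averages_between_lacunary_bounds[OF mono nn]) (auto simp: \<delta>_def)
  then show "eventually (\<lambda>m. dist (S m / m) \<mu> < e) sequentially"
    by eventually_elim (use j in \<open>auto simp: dist_real_def\<close>)
qed
section \<open>Probability tools\<close>

lemma distr_comp_eq:
  assumes [measurable]: "X \<in> borel_measurable M" "Y \<in> borel_measurable M" "f \<in> borel_measurable borel"
    and d: "distr M borel X = distr M borel Y"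
  shows "distr M borel (\<lambda>x. f (X x)) = distr M borel (\<lambda>x. f (Y x))"
proof -
  have "distr M borel (\<lambda>x. f (X x)) = distr (distr M borel X) borel f"
    by (subst distr_distr) (auto simp: comp_def)
  also have "\<dots> = distr (distr M borel Y) borel f" using d by simp
  also have "\<dots> = distr M borel (\<lambda>x. f (Y x))"
    by (subst distr_distr) (auto simp: comp_def)
  finally show ?thesis .
qed

lemma integral_eq_distr:
  fixes f :: "real \<Rightarrow> real"
  assumes [measurable]: "X \<in> borel_measurable M" "Y \<in> borel_measurable M" "f \<in> borel_measurable borel"
    and d: "distr M borel X = distr M borel Y"
  shows "integral\<^sup>L M (\<lambda>x. f (X x)) = integral\<^sup>L M (\<lambda>x. f (Y x))"
    and "integrable M (\<lambda>x. f (X x)) \<longleftrightarrow> integrable M (\<lambda>x. f (Y x))"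
proof -
  have "integral\<^sup>L M (\<lambda>x. f (X x)) = integral\<^sup>L (distr M borel X) f"
    by (rule integral_distr[symmetric]) auto
  also have "\<dots> = integral\<^sup>L M (\<lambda>x. f (Y x))" unfolding d by (rule integral_distr) auto
  finally show "integral\<^sup>L M (\<lambda>x. f (X x)) = integral\<^sup>L M (\<lambda>x. f (Y x))" .
  have "integrable M (\<lambda>x. f (X x)) \<longleftrightarrow> integrable (distr M borel X) f"
    by (rule integrable_distr_eq[symmetric]) auto
  also have "\<dots> \<longleftrightarrow> integrable M (\<lambda>x. f (Y x))" unfolding d by (rule integrable_distr_eq) auto
  finally show "integrable M (\<lambda>x. f (X x)) \<longleftrightarrow> integrable M (\<lambda>x. f (Y x))" .
qed

lemma measure_eq_distr:
  assumes [measurable]: "X \<in> borel_measurable M" "Y \<in> borel_measurable M" "B \<in> sets borel"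
    and d: "distr M borel X = distr M borel Y"
  shows "measure M {x\<in>space M. X x \<in> B} = measure M {x\<in>space M. Y x \<in> B}"
proof -
  have "measure M {x\<in>space M. X x \<in> B} = measure (distr M borel X) B"
    by (subst measure_distr) (auto simp: vimage_def Int_def conj_commute)
  also have "\<dots> = measure M {x\<in>space M. Y x \<in> B}"
    unfolding d by (subst measure_distr) (auto simp: vimage_def Int_def conj_commute)
  finally show ?thesis .
qed

lemma AE_eq_distr:
  assumes [measurable]: "X \<in> borel_measurable M" "Y \<in> borel_measurable M" "{x\<in>space borel. P x} \<in> sets borel"
    and d: "distr M borel X = distr M borel Y"
    and ae: "AE x in M. P (Y x)"
  shows "AE x in M. P (X x)"
proof -
  have "AE x in distr M borel X. P x" unfolding d using ae by (subst AE_distr_iff) auto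
  then show ?thesis by (subst (asm) AE_distr_iff) auto
qed

lemma (in prob_space) borel_cantelli_prob:
  assumes meas: "\<And>n. {x\<in>space M. P n x} \<in> sets M"
    and sum: "summable (\<lambda>n. prob {x\<in>space M. P n x})"
  shows "AE x in M. eventually (\<lambda>n. \<not> P n x) sequentially"
proof -
  have "AE x in M. eventually (\<lambda>n. x \<in> space M - {x\<in>space M. P n x}) sequentially"
    by (rule borel_cantelli_AE1) (use meas sum in \<open>auto simp: emeasure_eq_measure\<close>)
  then show ?thesis by (rule AE_mp) (auto intro!: AE_I2 elim!: eventually_mono)
qed

text \<open>Almost-sure convergence to zero follows once every tolerance \<open>e > 0\<close> is almost surely
  eventually respected; the countably many tolerances \<open>1/(j+1)\<close> suffice.\<close>
lemma AE_tendsto_zero_if_eventually_small: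
  fixes f :: "nat \<Rightarrow> 'a \<Rightarrow> real"
  assumes small: "\<And>e. e > 0 \<Longrightarrow> AE x in M. eventually (\<lambda>n. \<bar>f n x\<bar> < e) sequentially"
  shows "AE x in M. (\<lambda>n. f n x) \<longlonglongrightarrow> 0"
proof -
  have "AE x in M. \<forall>j::nat. eventually (\<lambda>n. \<bar>f n x\<bar> < 1 / (real j + 1)) sequentially"
    using small by (subst AE_all_countable) simp
  then show ?thesis
  proof eventually_elim
    case (elim x)
    show ?case
    proof (rule tendstoI)
      fix e :: real assume "e > 0"
      then obtain j :: nat where "inverse (real (Suc j)) < e" using reals_Archimedean by blast
      then have "1 / (real j + 1) < e" by (simp add: inverse_eq_divide add.commute)
      then show "eventually (\<lambda>n. dist (f n x) 0 < e) sequentially"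
        using elim[rule_format, of j] by (auto elim!: eventually_mono)
    qed
  qed
qed

text \<open>Almost-sure convergence implies convergence in probability (dominated convergence applied
  to the indicators of the deviation events).\<close>
lemma (in prob_space) AE_tendsto_imp_tendsto_in_prob:
  fixes f :: "nat \<Rightarrow> 'a \<Rightarrow> real"
  assumes fm: "\<And>n. f n \<in> borel_measurable M"
    and lim: "AE x in M. (\<lambda>n. f n x) \<longlonglongrightarrow> L" and e: "e > 0"
  shows "(\<lambda>n. prob {x\<in>space M. e < \<bar>f n x - L\<bar>}) \<longlonglongrightarrow> 0"
proof -
  define s where "s n = (indicator {x\<in>space M. e < \<bar>f n x - L\<bar>} :: 'a \<Rightarrow> real)" for n
  have sm: "s n \<in> borel_measurable M" for n
    unfolding s_def using fm[of n] by measurable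
  have "(\<lambda>n. integral\<^sup>L M (s n)) \<longlonglongrightarrow> integral\<^sup>L M (\<lambda>x. 0::real)"
  proof (rule integral_dominated_convergence[where w="\<lambda>_. 1"])
    show "AE x in M. (\<lambda>n. s n x) \<longlonglongrightarrow> 0" using lim
    proof eventually_elim
      case (elim x)
      have "eventually (\<lambda>n. dist (f n x) L < e) sequentially" using elim e by (rule tendstoD)
      then have "eventually (\<lambda>n. s n x = 0) sequentially"
        by eventually_elim (auto simp: s_def dist_real_def)
      then show ?case by (rule tendsto_eventually)
    qed
  qed (use sm in \<open>auto simp: s_def\<close>)
  moreover have "integral\<^sup>L M (s n) = prob {x\<in>space M. e < \<bar>f n x - L\<bar>}" for n
    by (simp add: s_def Int_absorb2 subset_iff)
  ultimately show ?thesis by simp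
qed

lemma (in prob_space) indep_var_pair:
  fixes Z :: "'i \<Rightarrow> 'a \<Rightarrow> real"
  assumes ind: "indep_vars (\<lambda>_. borel) Z J" and ij: "i \<in> J" "j \<in> J" "i \<noteq> j"
  shows "indep_var borel (Z i) borel (Z j)"
proof -
  have "indep_vars (\<lambda>_. borel) Z (insert i {j})" using ij by (intro indep_vars_subset[OF ind]) auto
  then show ?thesis using indep_vars_sum[of "{j}" i Z] ij by simp
qed

lemma (in prob_space) second_moment_centered_sum:
  fixes Z :: "'i \<Rightarrow> 'a \<Rightarrow> real"
  assumes ind: "indep_vars (\<lambda>_. borel) Z J" and fin: "finite J"
    and bnd: "\<And>i x. i \<in> J \<Longrightarrow> x \<in> space M \<Longrightarrow> \<bar>Z i x\<bar> \<le> B"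
    and mean: "\<And>i. i \<in> J \<Longrightarrow> expectation (Z i) = m"
  shows "expectation (\<lambda>x. (\<Sum>i\<in>J. Z i x - m)^2) = (\<Sum>i\<in>J. expectation (\<lambda>x. (Z i x - m)^2))"
proof -
  have meas[measurable]: "Z i \<in> borel_measurable M" if "i \<in> J" for i
    using ind that by (auto simp: indep_vars_def)
  have intZ: "integrable M (Z i)" if "i \<in> J" for i
    using that bnd by (intro integrable_const_bound[where B=B]) auto
  have intP: "integrable M (\<lambda>x. (Z i x - m) * (Z j x - m))" if "i \<in> J" "j \<in> J" for i j
  proof (rule integrable_const_bound[where B="(B + \<bar>m\<bar>) * (B + \<bar>m\<bar>)"])
    show "AE x in M. norm ((Z i x - m) * (Z j x - m)) \<le> (B + \<bar>m\<bar>) * (B + \<bar>m\<bar>)"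
    proof (rule AE_I2)
      fix x assume x: "x \<in> space M"
      have "\<bar>Z i x - m\<bar> \<le> B + \<bar>m\<bar>" "\<bar>Z j x - m\<bar> \<le> B + \<bar>m\<bar>" using bnd[OF _ x] that by force+
      then show "norm ((Z i x - m) * (Z j x - m)) \<le> (B + \<bar>m\<bar>) * (B + \<bar>m\<bar>)"
        by (simp add: abs_mult mult_mono)
    qed
  qed (use that in auto)
  have cross: "expectation (\<lambda>x. (Z i x - m) * (Z j x - m)) = 0" if "i \<in> J" "j \<in> J" "i \<noteq> j" for i j
  proof -
    have "indep_var borel ((\<lambda>z. z - m) \<circ> Z i) borel ((\<lambda>z. z - m) \<circ> Z j)"
      by (rule indep_var_compose[OF indep_var_pair[OF ind that]]) auto
    then have "expectation (\<lambda>x. (Z i x - m) * (Z j x - m)) = expectation (\<lambda>x. Z i x - m) * expectation (\<lambda>x. Z j x - m)"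
      using that intZ by (intro indep_var_lebesgue_integral) (auto simp: comp_def)
    also have "expectation (\<lambda>x. Z i x - m) = 0" using that intZ mean by (simp add: prob_space)
    finally show ?thesis by simp
  qed
  have "expectation (\<lambda>x. (\<Sum>i\<in>J. Z i x - m)^2) = (\<Sum>i\<in>J. \<Sum>j\<in>J. expectation (\<lambda>x. (Z i x - m) * (Z j x - m)))"
    using intP by (simp add: power2_eq_square sum_product integrable_sum)
  also have "\<dots> = (\<Sum>i\<in>J. expectation (\<lambda>x. (Z i x - m)^2))"
  proof (rule sum.cong[OF refl])
    fix i assume i: "i \<in> J"
    have "(\<Sum>j\<in>J. expectation (\<lambda>x. (Z i x - m) * (Z j x - m)))
        = expectation (\<lambda>x. (Z i x - m) * (Z i x - m)) + (\<Sum>j\<in>J - {i}. expectation (\<lambda>x. (Z i x - m) * (Z j x - m)))"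
      using fin i by (rule sum.remove)
    also have "(\<Sum>j\<in>J - {i}. expectation (\<lambda>x. (Z i x - m) * (Z j x - m))) = 0"
      using cross i by (intro sum.neutral) auto
    finally show "(\<Sum>j\<in>J. expectation (\<lambda>x. (Z i x - m) * (Z j x - m))) = expectation (\<lambda>x. (Z i x - m)^2)"
      by (simp add: power2_eq_square)
  qed
  finally show ?thesis .
qed

text \<open>Chebyshev's inequality for a sum of bounded independent random variables with a common mean
  \<open>m\<close>: by Bienayme's identity its variance is at most the sum of the second moments.\<close>
lemma (in prob_space) chebyshev_indep_sum:
  fixes Z :: "'i \<Rightarrow> 'a \<Rightarrow> real" and m :: real
  assumes ind: "indep_vars (\<lambda>_. borel) Z J" and fin: "finite J"
    and bnd: "\<And>i x. i \<in> J \<Longrightarrow> x \<in> space M \<Longrightarrow> \<bar>Z i x\<bar> \<le> B"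
    and mean: "\<And>i. i \<in> J \<Longrightarrow> expectation (Z i) = m" and e: "e > 0"
  shows "prob {x\<in>space M. e \<le> \<bar>(\<Sum>i\<in>J. Z i x) - card J * m\<bar>}
           \<le> (\<Sum>i\<in>J. expectation (\<lambda>x. (Z i x)^2)) / e^2"
proof -
  let ?U = "\<lambda>x. \<Sum>i\<in>J. Z i x"
  have meas[measurable]: "Z i \<in> borel_measurable M" if "i \<in> J" for i
    using ind that by (auto simp: indep_vars_def)
  have intZ: "integrable M (Z i)" if "i \<in> J" for i
    using that bnd by (intro integrable_const_bound[where B=B]) auto
  have intZ2: "integrable M (\<lambda>x. (Z i x)^2)" if "i \<in> J" for i
    using that power_mono[OF bnd abs_ge_zero, of i _ 2]
    by (intro integrable_const_bound[where B="B^2"]) auto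
  have "(?U x)^2 \<le> (card J * B)^2" if "x \<in> space M" for x
  proof -
    have "\<bar>?U x\<bar> \<le> card J * B"
      using order.trans[OF sum_abs sum_bounded_above[of J "\<lambda>i. \<bar>Z i x\<bar>" B]] bnd that by auto
    then show ?thesis using power_mono[OF _ abs_ge_zero, of "?U x" _ 2] by simp
  qed
  then have intU2: "integrable M (\<lambda>x. (?U x)^2)"
    by (intro integrable_const_bound[where B="(card J * B)^2"] AE_I2) auto
  have EU: "expectation ?U = card J * m"
    using intZ mean by (simp add: Bochner_Integration.integral_sum)
  have "prob {x\<in>space M. e \<le> \<bar>?U x - card J * m\<bar>} \<le> variance ?U / e^2"
    using Chebyshev_inequality[of ?U e] intU2 e unfolding EU by simp
  also have "variance ?U = expectation (\<lambda>x. (\<Sum>i\<in>J. Z i x - m)^2)"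
    unfolding EU by (simp add: sum_subtractf)
  also have "\<dots> = (\<Sum>i\<in>J. expectation (\<lambda>x. (Z i x - m)^2))"
    by (rule second_moment_centered_sum[OF ind fin bnd mean])
  also have "\<dots> \<le> (\<Sum>i\<in>J. expectation (\<lambda>x. (Z i x)^2))"
  proof (rule sum_mono)
    fix i assume i: "i \<in> J"
    have "expectation (\<lambda>x. (Z i x - m)^2) = expectation (\<lambda>x. (Z i x)^2) - m^2"
      using variance_eq[OF intZ[OF i] intZ2[OF i]] mean[OF i] by simp
    then show "expectation (\<lambda>x. (Z i x - m)^2) \<le> expectation (\<lambda>x. (Z i x)^2)" by simp
  qed
  finally show ?thesis using e by (simp add: divide_right_mono)
qed

section \<open>The strong law of large numbers for nonnegative i.i.d. variables\<close>

definition trunc_at :: "real \<Rightarrow> real \<Rightarrow> real" where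
  "trunc_at c w = (if w \<le> c then w else 0)"

lemma trunc_at_measurable[measurable]:
  "(\<lambda>x. trunc_at c (f x)) \<in> borel_measurable M" if [measurable]: "f \<in> borel_measurable M"
  unfolding trunc_at_def by measurable

locale nonneg_iid = prob_space +
  fixes W :: "nat \<Rightarrow> 'a \<Rightarrow> real" and W0 :: "'a \<Rightarrow> real"
  assumes indep: "indep_vars (\<lambda>_. borel) W {1..}"
    and W0_meas[measurable]: "W0 \<in> borel_measurable M"
    and nonneg: "\<And>i x. x \<in> space M \<Longrightarrow> 0 \<le> W i x"
    and W0_nonneg: "\<And>x. x \<in> space M \<Longrightarrow> 0 \<le> W0 x"
    and dist: "\<And>i. i \<ge> 1 \<Longrightarrow> distr M borel (W i) = distr M borel W0"
    and int: "integrable M W0"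
begin

lemma W_meas[measurable]: "i \<ge> 1 \<Longrightarrow> W i \<in> borel_measurable M"
  using indep by (auto simp: indep_vars_def)

text \<open>\<open>\<Sum>\<^sub>n k\<^sub>n P(W0 > k\<^sub>n) \<le> 2a/(a-1) E[W0]\<close> for the lacunary sequence \<open>k\<^sub>n = \<lfloor>a^n\<rfloor>\<close>.\<close>
lemma exceedance_summable:
  fixes a :: real assumes a: "a > 1"
  shows "summable (\<lambda>n. lacunary a n * prob {x\<in>space M. lacunary a n < W0 x})"
proof (rule summableI_nonneg_bounded)
  let ?k = "lacunary a"
  let ?f = "\<lambda>n x. real (?k n) * indicator {real (?k n)<..} (W0 x) :: real"
  show "0 \<le> ?k n * prob {x\<in>space M. ?k n < W0 x}" for n by simp
  fix N
  have int_f: "integrable M (?f n)" for n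
    by (intro integrable_const_bound[where B="real (?k n)"]) (auto simp: indicator_def)
  have "prob {x\<in>space M. c < W0 x} = expectation (\<lambda>x. indicator {c<..} (W0 x))" for c
  proof -
    have "expectation (\<lambda>x. indicator {c<..} (W0 x)) = expectation (indicator {x\<in>space M. c < W0 x} :: _ \<Rightarrow> real)"
      by (rule Bochner_Integration.integral_cong) (auto simp: indicator_def)
    also have "\<dots> = prob {x\<in>space M. c < W0 x}" by (simp add: Int_absorb2 subset_iff)
    finally show ?thesis by simp
  qed
  then have "(\<Sum>n<N. ?k n * prob {x\<in>space M. ?k n < W0 x}) = (\<Sum>n<N. expectation (?f n))"
    by simp
  also have "\<dots> = expectation (\<lambda>x. \<Sum>n<N. ?f n x)"
    by (rule Bochner_Integration.integral_sum[symmetric]) (use int_f in auto)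
  also have "\<dots> \<le> expectation (\<lambda>x. a * (2 * W0 x) / (a - 1))"
  proof (rule integral_mono)
    show "integrable M (\<lambda>x. \<Sum>n<N. ?f n x)"
      by (rule Bochner_Integration.integrable_sum) (rule int_f)
    show "integrable M (\<lambda>x. a * (2 * W0 x) / (a - 1))" using int by auto
    fix x assume x: "x \<in> space M"
    have "(\<Sum>n<N. ?f n x) \<le> (\<Sum>n<N. if a^n < 2 * W0 x then a^n else 0)"
    proof (rule sum_mono)
      fix n
      show "?f n x \<le> (if a^n < 2 * W0 x then a^n else 0)"
      proof (cases "real (?k n) < W0 x")
        case True
        then have "a^n < 2 * W0 x" using lacunary_bounds(4)[OF a, of n] by linarith
        then show ?thesis using True lacunary_bounds(2)[OF a, of n] by (simp add: indicator_def)
      qed (use a in \<open>simp add: indicator_def\<close>)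
    qed
    also have "\<dots> \<le> a * (2 * W0 x) / (a - 1)"
      using W0_nonneg[OF x] by (intro sum_powers_below a) auto
    finally show "(\<Sum>n<N. ?f n x) \<le> a * (2 * W0 x) / (a - 1)" .
  qed
  finally show "(\<Sum>n<N. ?k n * prob {x\<in>space M. ?k n < W0 x}) \<le> expectation (\<lambda>x. a * (2 * W0 x) / (a - 1))" .
qed

text \<open>Hence, by Borel--Cantelli, almost surely truncation at \<open>k\<^sub>n\<close> eventually changes none of
  \<open>W 1, \<dots>, W k\<^sub>n\<close>.\<close>
lemma eventually_no_large_values:
  fixes a :: real assumes a: "a > 1"
  shows "AE x in M. eventually (\<lambda>n. \<forall>i\<in>{1..lacunary a n}. W i x \<le> lacunary a n) sequentially"
proof -
  let ?k = "lacunary a"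
  let ?E = "\<lambda>n. {x\<in>space M. \<exists>i\<in>{1..?k n}. ?k n < W i x}"
  have union_bound: "prob (?E n) \<le> ?k n * prob {x\<in>space M. ?k n < W0 x}" for n
  proof -
    have "prob (?E n) = prob (\<Union>i\<in>{1..?k n}. {x\<in>space M. ?k n < W i x})"
      by (rule arg_cong[where f=prob]) auto
    also have "\<dots> \<le> (\<Sum>i\<in>{1..?k n}. prob {x\<in>space M. ?k n < W i x})"
      by (intro finite_measure_subadditive_finite) auto
    also have "\<dots> = (\<Sum>i\<in>{1..?k n}. prob {x\<in>space M. ?k n < W0 x})"
      using measure_eq_distr[OF W_meas W0_meas _ dist, of _ "{real (?k n)<..}"]
      by (intro sum.cong) auto
    finally show ?thesis by simp
  qed
  have "summable (\<lambda>n. prob (?E n))"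
    by (rule summable_comparison_test'[OF exceedance_summable[OF a], of 0]) (use union_bound in auto)
  then have "AE x in M. eventually (\<lambda>n. \<not> (\<exists>i\<in>{1..?k n}. ?k n < W i x)) sequentially"
    by (intro borel_cantelli_prob) auto
  then show ?thesis by (simp add: not_less)
qed

text \<open>\<open>\<Sum>\<^sub>n E[trunc k\<^sub>n W0\<^sup>2] / k\<^sub>n \<le> 2a/(a-1) E[W0]\<close>: the variance bound needed for the
  truncated sums.\<close>
lemma truncated_second_moments_summable:
  fixes a :: real assumes a: "a > 1"
  shows "summable (\<lambda>n. expectation (\<lambda>x. (trunc_at (lacunary a n) (W0 x))^2) / lacunary a n)"
proof (rule summableI_nonneg_bounded)
  let ?k = "lacunary a"
  let ?f = "\<lambda>n x. (trunc_at (?k n) (W0 x))^2 / ?k n"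
  show "0 \<le> expectation (\<lambda>x. (trunc_at (?k n) (W0 x))^2) / ?k n" for n by simp
  fix N
  have int_f: "integrable M (?f n)" for n
    by (intro integrable_const_bound[where B="(real (?k n))^2 / ?k n"])
       (auto simp: trunc_at_def W0_nonneg abs_le_square_iff power_mono intro!: divide_right_mono)
  have "(\<Sum>n<N. expectation (\<lambda>x. (trunc_at (?k n) (W0 x))^2) / ?k n) = expectation (\<lambda>x. \<Sum>n<N. ?f n x)"
    by (subst Bochner_Integration.integral_sum) (use int_f in auto)
  also have "\<dots> \<le> expectation (\<lambda>x. 2 * (a / (a - 1)) * W0 x)"
  proof (rule integral_mono)
    show "integrable M (\<lambda>x. \<Sum>n<N. ?f n x)"
      by (rule Bochner_Integration.integrable_sum) (rule int_f)
    show "integrable M (\<lambda>x. 2 * (a / (a - 1)) * W0 x)" using int by auto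
    fix x assume x: "x \<in> space M"
    show "(\<Sum>n<N. ?f n x) \<le> 2 * (a / (a - 1)) * W0 x"
    proof (cases "W0 x = 0")
      case False
      then have w: "0 < W0 x" using W0_nonneg[OF x] by simp
      have "?f n x \<le> 2 * (W0 x)^2 * (if W0 x \<le> a^n then 1 / a^n else 0)" for n
      proof (cases "W0 x \<le> ?k n")
        case True
        have "(W0 x)^2 / ?k n = 2 * (W0 x)^2 / (2 * ?k n)" by simp
        also have "\<dots> \<le> 2 * (W0 x)^2 / a^n"
          using lacunary_bounds[OF a, of n] a by (intro divide_left_mono) auto
        finally show ?thesis using True lacunary_bounds(2)[OF a, of n] by (simp add: trunc_at_def)
      qed (use w in \<open>simp add: trunc_at_def\<close>)
      then have "(\<Sum>n<N. ?f n x) \<le> 2 * (W0 x)^2 * (\<Sum>n<N. if W0 x \<le> a^n then 1 / a^n else 0)"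
        by (simp add: sum_distrib_left sum_mono)
      also have "\<dots> \<le> 2 * (W0 x)^2 * (a / ((a - 1) * W0 x))"
        by (intro mult_left_mono sum_inverse_powers_above a w) auto
      also have "\<dots> = 2 * (a / (a - 1)) * W0 x" using w a by (simp add: field_simps power2_eq_square)
      finally show ?thesis .
    qed (simp add: trunc_at_def)
  qed
  finally show "(\<Sum>n<N. expectation (\<lambda>x. (trunc_at (?k n) (W0 x))^2) / ?k n)
      \<le> expectation (\<lambda>x. 2 * (a / (a - 1)) * W0 x)" .
qed

lemma truncated_sum_deviation:
  fixes k :: nat and e :: real assumes k: "0 < k" and e: "0 < e"
  shows "prob {x\<in>space M. e * k \<le> \<bar>(\<Sum>i\<in>{1..k}. trunc_at k (W i x)) - k * expectation (\<lambda>x. trunc_at k (W0 x))\<bar>}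
           \<le> (1 / e^2) * (expectation (\<lambda>x. (trunc_at k (W0 x))^2) / k)"
proof -
  let ?m = "expectation (\<lambda>x. trunc_at k (W0 x))"
  have ind: "indep_vars (\<lambda>_. borel) (\<lambda>i x. trunc_at k (W i x)) {1..k}"
    by (rule indep_vars_compose2[where Y="\<lambda>_. trunc_at k", OF indep_vars_subset[OF indep]])
       (auto simp: trunc_at_def)
  have moment: "expectation (\<lambda>x. g (W i x)) = expectation (\<lambda>x. g (W0 x))"
    if "i \<in> {1..k}" "g \<in> borel_measurable borel" for i and g :: "real \<Rightarrow> real"
    using that by (intro integral_eq_distr(1)[OF W_meas W0_meas _ dist]) auto
  have bnd: "\<bar>trunc_at k (W i x)\<bar> \<le> k" if "x \<in> space M" for i x
    using nonneg[OF that, of i] by (auto simp: trunc_at_def)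
  have mean: "expectation (\<lambda>x. trunc_at k (W i x)) = ?m" if "i \<in> {1..k}" for i
    using that by (rule moment) simp
  have second: "(\<Sum>i\<in>{1..k}. expectation (\<lambda>x. (trunc_at k (W i x))^2))
                  = k * expectation (\<lambda>x. (trunc_at k (W0 x))^2)"
    using moment[of _ "\<lambda>w. (trunc_at k w)^2"] by simp
  have "prob {x\<in>space M. e * k \<le> \<bar>(\<Sum>i\<in>{1..k}. trunc_at k (W i x)) - card {1..k} * ?m\<bar>}
      \<le> (\<Sum>i\<in>{1..k}. expectation (\<lambda>x. (trunc_at k (W i x))^2)) / (e * k)^2"
    by (rule chebyshev_indep_sum[OF ind finite_atLeastAtMost bnd mean]) (use e k in simp_all)
  also have "\<dots> = (1 / e^2) * (expectation (\<lambda>x. (trunc_at k (W0 x))^2) / k)"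
    unfolding second using k e by (simp add: field_simps power2_eq_square)
  finally show ?thesis by simp
qed

text \<open>Along the lacunary sequence, the averages of the truncated variables concentrate around
  their means almost surely: the Chebyshev bounds are summable, so Borel--Cantelli applies.\<close>
lemma truncated_averages_concentrate:
  fixes a :: real assumes a: "a > 1"
  shows "AE x in M. (\<lambda>n. (\<Sum>i\<in>{1..lacunary a n}. trunc_at (lacunary a n) (W i x)) / lacunary a n
            - expectation (\<lambda>x. trunc_at (lacunary a n) (W0 x))) \<longlonglongrightarrow> 0"
proof (rule AE_tendsto_zero_if_eventually_small)
  let ?k = "lacunary a"
  define m where "m n = expectation (\<lambda>x. trunc_at (?k n) (W0 x))" for n
  define U where "U n x = (\<Sum>i\<in>{1..?k n}. trunc_at (?k n) (W i x))" for n x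
  have kpos: "0 < ?k n" for n using lacunary_bounds(1)[OF a, of n] by simp
  fix e :: real assume e: "e > 0"
  have "summable (\<lambda>n. (1 / e^2) * (expectation (\<lambda>x. (trunc_at (?k n) (W0 x))^2) / ?k n))"
    using truncated_second_moments_summable[OF a] by (rule summable_mult)
  then have "summable (\<lambda>n. prob {x\<in>space M. e * ?k n \<le> \<bar>U n x - ?k n * m n\<bar>})"
    by (rule summable_comparison_test'[of _ 0])
       (use truncated_sum_deviation[OF kpos e] in \<open>simp add: U_def m_def\<close>)
  then have "AE x in M. eventually (\<lambda>n. \<not> e * ?k n \<le> \<bar>U n x - ?k n * m n\<bar>) sequentially"
    by (rule borel_cantelli_prob[rotated]) (unfold U_def, measurable)
  then show "AE x in M. eventually (\<lambda>n. \<bar>(\<Sum>i\<in>{1..?k n}. trunc_at (?k n) (W i x)) / ?k n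
      - expectation (\<lambda>x. trunc_at (?k n) (W0 x))\<bar> < e) sequentially"
  proof (rule AE_mp, intro AE_I2 impI)
    fix x assume "eventually (\<lambda>n. \<not> e * ?k n \<le> \<bar>U n x - ?k n * m n\<bar>) sequentially"
    then show "eventually (\<lambda>n. \<bar>(\<Sum>i\<in>{1..?k n}. trunc_at (?k n) (W i x)) / ?k n
        - expectation (\<lambda>x. trunc_at (?k n) (W0 x))\<bar> < e) sequentially"
    proof eventually_elim
      case (elim n)
      have "U n x / ?k n - m n = (U n x - ?k n * m n) / ?k n"
        using kpos[of n] by (simp add: diff_divide_distrib)
      then have "\<bar>U n x / ?k n - m n\<bar> = \<bar>U n x - ?k n * m n\<bar> / ?k n"
        using kpos[of n] by (simp add: abs_divide)
      also have "\<dots> < e" using elim kpos[of n] by (simp add: pos_divide_less_eq not_le mult.commute)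
      finally show ?case by (simp add: U_def m_def)
    qed
  qed
qed

lemma truncated_means_converge:
  fixes a :: real assumes a: "a > 1"
  shows "(\<lambda>n. expectation (\<lambda>x. trunc_at (lacunary a n) (W0 x))) \<longlonglongrightarrow> expectation W0"
proof (rule integral_dominated_convergence[where w=W0])
  show "AE x in M. (\<lambda>n. trunc_at (lacunary a n) (W0 x)) \<longlonglongrightarrow> W0 x"
  proof (rule AE_I2)
    fix x
    have "eventually (\<lambda>n. W0 x < lacunary a n) sequentially" by (rule lacunary_unbounded[OF a])
    then have "eventually (\<lambda>n. trunc_at (lacunary a n) (W0 x) = W0 x) sequentially"
      by eventually_elim (simp add: trunc_at_def)
    then show "(\<lambda>n. trunc_at (lacunary a n) (W0 x)) \<longlonglongrightarrow> W0 x" by (rule tendsto_eventually)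
  qed
  show "AE x in M. norm (trunc_at (lacunary a n) (W0 x)) \<le> W0 x" for n
    by (rule AE_I2) (auto simp: trunc_at_def W0_nonneg)
qed (auto simp: int)

lemma slln_lacunary:
  fixes a :: real assumes a: "a > 1"
  shows "AE x in M. (\<lambda>n. (\<Sum>i=1..lacunary a n. W i x) / lacunary a n) \<longlonglongrightarrow> expectation W0"
  using eventually_no_large_values[OF a] truncated_averages_concentrate[OF a]
proof eventually_elim
  case (elim x)
  let ?k = "lacunary a"
  let ?m = "\<lambda>n. expectation (\<lambda>x. trunc_at (?k n) (W0 x))"
  have "eventually (\<lambda>n. (\<Sum>i\<in>{1..?k n}. trunc_at (?k n) (W i x)) / ?k n - ?m n
          = (\<Sum>i=1..?k n. W i x) / ?k n - ?m n) sequentially"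
    using elim(1) by eventually_elim (auto intro!: sum.cong simp: trunc_at_def)
  with elim(2) have "(\<lambda>n. (\<Sum>i=1..?k n. W i x) / ?k n - ?m n) \<longlonglongrightarrow> 0"
    by (rule Lim_transform_eventually)
  then have "(\<lambda>n. ((\<Sum>i=1..?k n. W i x) / ?k n - ?m n) + ?m n) \<longlonglongrightarrow> 0 + expectation W0"
    by (intro tendsto_add truncated_means_converge[OF a])
  then show ?case by simp
qed

text \<open>The strong law of large numbers (Etemadi's argument): the lacunary sequences for
  \<open>a = 1 + 1/(j+1)\<close> are countably many, and interpolation gives the full sequence.\<close>
theorem slln:
  "AE x in M. (\<lambda>n. (\<Sum>i=1..n. W i x) / n) \<longlonglongrightarrow> expectation W0"
proof -
  have lacunary_limits: "AE x in M. (\<lambda>n. (\<Sum>i=1..lacunary (1 + 1/(real j + 1)) n. W i x)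
      / lacunary (1 + 1/(real j + 1)) n) \<longlonglongrightarrow> expectation W0" for j :: nat
    by (rule slln_lacunary) (simp add: add_pos_pos)
  have "AE x in M. \<forall>j::nat. (\<lambda>n. (\<Sum>i=1..lacunary (1 + 1/(real j + 1)) n. W i x)
      / lacunary (1 + 1/(real j + 1)) n) \<longlonglongrightarrow> expectation W0"
    unfolding AE_all_countable using lacunary_limits by blast
  then show ?thesis
  proof (rule AE_mp, intro AE_I2 impI)
    fix x assume x: "x \<in> space M" and lim: "\<forall>j::nat. (\<lambda>n. (\<Sum>i=1..lacunary (1 + 1/(real j + 1)) n. W i x)
      / lacunary (1 + 1/(real j + 1)) n) \<longlonglongrightarrow> expectation W0"
    have mono: "mono (\<lambda>m. \<Sum>i=1..m. W i x)"
      by (rule monoI, rule sum_mono2) (use nonneg[OF x] in auto)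
    show "(\<lambda>n. (\<Sum>i=1..n. W i x) / n) \<longlonglongrightarrow> expectation W0"
      by (rule averages_converge_from_lacunary[OF mono]) (use lim nonneg[OF x] in \<open>auto intro: sum_nonneg\<close>)
  qed
qed

end

section \<open>The estimator \<open>\<kappa>\<^sub>h(n)\<close>\<close>

definition excess_part :: "real \<Rightarrow> real \<Rightarrow> real" where
  "excess_part h w = (if h < w then w else 0)"

lemma excess_part_measurable[measurable]: "excess_part h \<in> borel_measurable borel"
  unfolding excess_part_def by measurable

lemma excess_part_integrable:
  assumes "integrable M Y" shows "integrable M (\<lambda>x. excess_part h (Y x))"
proof (rule Bochner_Integration.integrable_bound[OF assms])
  have [measurable]: "Y \<in> borel_measurable M" using assms by (rule borel_measurable_integrable)
  show "(\<lambda>x. excess_part h (Y x)) \<in> borel_measurable M" by measurable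
qed (auto simp: excess_part_def)

lemma (in prob_space) expectation_pos:
  fixes Y :: "'a \<Rightarrow> real"
  assumes "AE x in M. 0 < Y x" and "integrable M Y"
  shows "0 < expectation Y"
  using integral_less_AE_space[of "\<lambda>_. 0" Y] assms by (simp add: emeasure_space_1)

lemma (in prob_space) kappa_facts:
  fixes Y :: "'a \<Rightarrow> real"
  assumes Y[measurable]: "Y \<in> borel_measurable M" and pos: "AE x in M. 0 < Y x"
    and int: "integrable M Y" and h: "0 < h" and tail: "prob {x\<in>space M. Y x > h} < 1"
  shows "kappa M Y h = expectation (\<lambda>x. excess_part h (Y x)) / expectation Y"
    and "0 \<le> kappa M Y h" and "kappa M Y h < 1"
proof -
  have EY: "0 < expectation Y" using expectation_pos[OF pos int] .
  have "(\<integral>x. Y x * indicator {x\<in>space M. Y x > h} x \<partial>M) = expectation (\<lambda>x. excess_part h (Y x))"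
    by (rule Bochner_Integration.integral_cong) (auto simp: indicator_def excess_part_def)
  then show kappa: "kappa M Y h = expectation (\<lambda>x. excess_part h (Y x)) / expectation Y"
    unfolding kappa_def by simp
  have "0 \<le> expectation (\<lambda>x. excess_part h (Y x))"
    using h by (intro Bochner_Integration.integral_nonneg) (auto simp: excess_part_def)
  then show "0 \<le> kappa M Y h" unfolding kappa using EY by simp
  let ?A = "{x\<in>space M. Y x \<le> h}"
  have "?A = space M - {x\<in>space M. Y x > h}" by auto
  then have "prob ?A \<noteq> 0" using tail by (simp add: prob_compl)
  then have "expectation (\<lambda>x. excess_part h (Y x)) < expectation Y"
    using pos by (intro integral_less_AE[OF excess_part_integrable[OF int] int, of ?A])
                 (auto simp: emeasure_eq_measure excess_part_def elim!: eventually_mono)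
  then show "kappa M Y h < 1" unfolding kappa using EY by simp
qed

text \<open>The excess of \<open>w\<close> over the fraction \<open>q\<close>, i.e.\ \<open>w (1\<^sub>{w > h} - q)\<close>.  Its expectation
  vanishes exactly when \<open>q = \<kappa>\<^sub>h\<close>.\<close>
definition centered :: "real \<Rightarrow> real \<Rightarrow> real \<Rightarrow> real" where
  "centered h q w = w * ((if h < w then 1 else 0) - q)"

lemma centered_measurable[measurable]: "centered h q \<in> borel_measurable borel"
  unfolding centered_def by measurable

lemma kappa_hat_decomposition:
  assumes pos: "\<And>i. i \<in> {1..n} \<Longrightarrow> 0 < X i \<omega>" and n: "1 \<le> n"
  shows "kappa_hat X h n \<omega> = q + (\<Sum>i\<in>{1..n}. centered h q (X i \<omega>) / (\<Sum>j\<in>{1..n}. X j \<omega>))"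
proof -
  let ?S = "\<Sum>j\<in>{1..n}. X j \<omega>"
  have S: "0 < ?S" using pos n by (intro sum_pos) auto
  have "(\<Sum>i\<in>{1..n}. (if X i \<omega> > h then 1 else 0) * X i \<omega>) = (\<Sum>i\<in>{1..n}. centered h q (X i \<omega>)) + q * ?S"
    by (simp add: centered_def sum.distrib[symmetric] sum_distrib_left algebra_simps)
  then show ?thesis
    using S by (simp add: kappa_hat_def add_divide_distrib sum_divide_distrib)
qed

text \<open>Replacing the own contribution \<open>u\<close> in the denominator by \<open>h\<close> can only increase the term
  \<open>centered(u)/(u + s)\<close>, strictly if \<open>u > h\<close>: both numerator and denominator change sign
  consistently at \<open>u = h\<close>.\<close>
lemma centered_ratio_bound:
  fixes u s h q :: real
  assumes u: "0 < u" and s: "0 \<le> s" and h: "0 < h" and q: "0 \<le> q" "q < 1"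
  shows "centered h q u / (u + s) \<le> centered h q u / (h + s)"
    and "h < u \<Longrightarrow> centered h q u / (u + s) < centered h q u / (h + s)"
    and "\<bar>centered h q u / (u + s)\<bar> \<le> 1 + q"
proof -
  have lt: "centered h q u / (u + s) < centered h q u / (h + s)" if hu: "h < u"
  proof -
    have "u * (1 - q) / (u + s) < u * (1 - q) / (h + s)"
      using u q hu h s by (intro divide_strict_left_mono) auto
    then show ?thesis using hu by (simp add: centered_def)
  qed
  then show "h < u \<Longrightarrow> centered h q u / (u + s) < centered h q u / (h + s)" .
  show "centered h q u / (u + s) \<le> centered h q u / (h + s)"
  proof (cases "h < u")
    case False
    have "u * q / (h + s) \<le> u * q / (u + s)"
      using False u q h s by (intro divide_left_mono) auto
    then show ?thesis using False by (simp add: centered_def)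
  qed (use lt in auto)
  have "\<bar>(if h < u then 1 else 0) - q\<bar> \<le> 1 + q" using q by auto
  then have "\<bar>centered h q u\<bar> \<le> (1 + q) * u"
    using u unfolding centered_def abs_mult by (simp add: mult.commute mult_left_mono)
  also have "\<dots> \<le> (1 + q) * (u + s)" using s q by (intro mult_left_mono) auto
  finally show "\<bar>centered h q u / (u + s)\<bar> \<le> 1 + q"
    using u s by (simp add: abs_divide divide_le_eq)
qed

lemma (in prob_space) expectation_negative_by_decoupling:
  fixes C T Z :: "'a \<Rightarrow> real" and G :: "real \<Rightarrow> real"
  assumes ind: "indep_var borel C borel T"
    and intC: "integrable M C" and meanC: "expectation C = 0"
    and G[measurable]: "G \<in> borel_measurable borel" and Gb: "\<And>t. \<bar>G t\<bar> \<le> B"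
    and intZ: "integrable M Z" and le: "AE x in M. Z x \<le> C x * G (T x)"
    and A: "A \<in> sets M" "prob A \<noteq> 0" and lt: "AE x in M. x \<in> A \<longrightarrow> Z x < C x * G (T x)"
  shows "expectation Z < 0"
proof -
  have [measurable]: "T \<in> borel_measurable M" using ind by (rule indep_var_rv2)
  have iv: "indep_var borel C borel (\<lambda>x. G (T x))"
    using indep_var_compose[OF ind measurable_id G] by (simp add: comp_def)
  have intG: "integrable M (\<lambda>x. G (T x))"
    using Gb by (intro integrable_const_bound[where B=B]) auto
  have "expectation Z < expectation (\<lambda>x. C x * G (T x))"
    using A lt le by (intro integral_less_AE[OF intZ indep_var_integrable[OF iv intC intG], of A])
                     (auto simp: emeasure_eq_measure elim!: eventually_mono)
  also have "\<dots> = 0" using indep_var_lebesgue_integral[OF iv intC intG] meanC by simp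
  finally show ?thesis .
qed

locale iid_sample = prob_space +
  fixes X :: "nat \<Rightarrow> 'a \<Rightarrow> real" and Y :: "'a \<Rightarrow> real"
  assumes Y_meas[measurable]: "Y \<in> borel_measurable M"
    and indep: "indep_vars (\<lambda>_. borel) X {1..}"
    and X_meas[measurable]: "\<And>i. i \<ge> 1 \<Longrightarrow> X i \<in> borel_measurable M"
    and X_distr: "\<And>i. i \<ge> 1 \<Longrightarrow> distr M borel (X i) = distr M borel Y"
begin

lemma nonneg_iid_transform:
  fixes f :: "real \<Rightarrow> real"
  assumes [measurable]: "f \<in> borel_measurable borel" and nn: "\<And>w. 0 \<le> f w"
    and int: "integrable M (\<lambda>x. f (Y x))"
  shows "nonneg_iid M (\<lambda>i x. f (X i x)) (\<lambda>x. f (Y x))"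
proof (intro nonneg_iid.intro nonneg_iid_axioms.intro)
  show "indep_vars (\<lambda>_. borel) (\<lambda>i x. f (X i x)) {1..}"
    by (rule indep_vars_compose2[OF indep]) measurable
  show "distr M borel (\<lambda>x. f (X i x)) = distr M borel (\<lambda>x. f (Y x))" if "1 \<le> i" for i
    by (rule distr_comp_eq[OF X_meas[OF that] Y_meas _ X_distr[OF that]]) measurable
qed (use int nn prob_space_axioms in auto)

lemma positive_copies:
  assumes pos: "AE x in M. 0 < Y x"
  shows "AE x in M. \<forall>i\<ge>1. 0 < X i x"
proof (subst AE_all_countable, intro allI)
  fix i :: nat
  show "AE x in M. i \<ge> 1 \<longrightarrow> 0 < X i x"
  proof (cases "i \<ge> 1")
    case True
    have "AE x in M. 0 < X i x"
      by (rule AE_eq_distr[OF X_meas[OF True] Y_meas _ X_distr[OF True] pos]) simp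
    then show ?thesis by auto
  qed simp
qed

lemma kappa_hat_measurable: "kappa_hat X h n \<in> borel_measurable M"
proof -
  have [measurable]: "(\<lambda>x. \<Sum>i\<in>{1..n}. f (X i x)) \<in> borel_measurable M"
    if [measurable]: "f \<in> borel_measurable borel" for f :: "real \<Rightarrow> real"
    by (intro borel_measurable_sum) auto
  have "kappa_hat X h n = (\<lambda>x. (\<Sum>i\<in>{1..n}. (\<lambda>w. (if w > h then 1 else 0) * w) (X i x))
                                / (\<Sum>i\<in>{1..n}. (\<lambda>w. w) (X i x)))"
    by (simp add: kappa_hat_def[abs_def])
  also have "\<dots> \<in> borel_measurable M" by measurable
  finally show ?thesis .
qed

text \<open>Strong consistency: \<open>\<kappa>\<^sub>h(n)\<close> is a ratio of two sample means, to both of which the strong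
  law applies (the numerator is the sample mean of \<open>X 1\<^sub>{X > h}\<close>).\<close>
lemma kappa_hat_tendsto:
  assumes pos: "AE x in M. 0 < Y x" and int: "integrable M Y" and h: "0 < h"
  shows "AE \<omega> in M. (\<lambda>n. kappa_hat X h n \<omega>)
                      \<longlonglongrightarrow> expectation (\<lambda>x. excess_part h (Y x)) / expectation Y"
proof -
  interpret denominator: nonneg_iid M "\<lambda>i x. max 0 (X i x)" "\<lambda>x. max 0 (Y x)"
    by (rule nonneg_iid_transform) (use int in auto)
  interpret numerator: nonneg_iid M "\<lambda>i x. excess_part h (X i x)" "\<lambda>x. excess_part h (Y x)"
    by (rule nonneg_iid_transform) (use h excess_part_integrable[OF int] in \<open>auto simp: excess_part_def\<close>)
  have EY: "expectation (\<lambda>x. max 0 (Y x)) = expectation Y"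
    using pos by (intro integral_cong_AE) auto
  show ?thesis
    using denominator.slln numerator.slln positive_copies[OF pos]
  proof eventually_elim
    case (elim \<omega>)
    let ?avg = "\<lambda>f n. (\<Sum>i=1..n. f (X i \<omega>)) / real n"
    have "(\<lambda>n. ?avg (excess_part h) n / ?avg (max 0) n)
            \<longlonglongrightarrow> expectation (\<lambda>x. excess_part h (Y x)) / expectation Y"
      using elim(1,2) expectation_pos[OF pos int] EY by (intro tendsto_divide) auto
    moreover have "eventually (\<lambda>n. ?avg (excess_part h) n / ?avg (max 0) n = kappa_hat X h n \<omega>) sequentially"
    proof (rule eventually_sequentiallyI[of 1])
      fix n :: nat assume "1 \<le> n"
      moreover have "(\<Sum>i=1..n. max 0 (X i \<omega>)) = (\<Sum>i=1..n. X i \<omega>)"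
        using elim(3) by (intro sum.cong) auto
      moreover have "(\<Sum>i=1..n. excess_part h (X i \<omega>)) = (\<Sum>i=1..n. (if X i \<omega> > h then 1 else 0) * X i \<omega>)"
        by (intro sum.cong) (auto simp: excess_part_def)
      ultimately show "?avg (excess_part h) n / ?avg (max 0) n = kappa_hat X h n \<omega>"
        by (simp add: kappa_hat_def)
    qed
    ultimately show ?case by (rule Lim_transform_eventually)
  qed
qed


lemma centered_copy_mean_zero:
  assumes int: "integrable M Y" and q: "0 \<le> q"
    and mean: "expectation (\<lambda>x. excess_part h (Y x)) = q * expectation Y" and i: "i \<ge> 1"
  shows "integrable M (\<lambda>x. centered h q (X i x))" and "expectation (\<lambda>x. centered h q (X i x)) = 0"
proof -
  have bound: "\<bar>centered h q w\<bar> \<le> (1 + q) * \<bar>w\<bar>" for w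
  proof -
    have "\<bar>(if h < w then 1 else 0) - q\<bar> \<le> 1 + q" using q by auto
    then show ?thesis unfolding centered_def abs_mult by (simp add: mult.commute mult_left_mono)
  qed
  have "integrable M (\<lambda>x. centered h q (Y x))"
    by (rule Bochner_Integration.integrable_bound[of _ "\<lambda>x. (1 + q) * Y x"])
       (use int bound q in \<open>auto simp: abs_mult\<close>)
  then show "integrable M (\<lambda>x. centered h q (X i x))"
    using integral_eq_distr(2)[OF X_meas[OF i] Y_meas _ X_distr[OF i]] by simp
  have "expectation (\<lambda>x. centered h q (X i x)) = expectation (\<lambda>x. centered h q (Y x))"
    by (rule integral_eq_distr(1)[OF X_meas[OF i] Y_meas _ X_distr[OF i]]) simp
  also have "\<dots> = expectation (\<lambda>x. excess_part h (Y x) - q * Y x)"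
    by (rule Bochner_Integration.integral_cong) (auto simp: centered_def excess_part_def algebra_simps)
  also have "\<dots> = 0" using int excess_part_integrable[OF int] mean by simp
  finally show "expectation (\<lambda>x. centered h q (X i x)) = 0" .
qed

text \<open>The denominator is replaced by
  \<open>h + \<Sum>\<^sub>j\<^sub>\<noteq>\<^sub>i X j\<close>, which is independent of \<open>X i\<close>; decoupling then applies.\<close>
lemma centered_ratio_expectation_negative:
  assumes pos: "AE x in M. 0 < Y x" and int: "integrable M Y" and h: "0 < h"
    and q: "0 \<le> q" "q < 1" and mean: "expectation (\<lambda>x. excess_part h (Y x)) = q * expectation Y"
    and tail: "0 < prob {x\<in>space M. Y x > h}" and i: "i \<in> {1..n}"
  defines "S \<equiv> \<lambda>x. \<Sum>j\<in>{1..n}. X j x"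
  shows "integrable M (\<lambda>x. centered h q (X i x) / S x)"
    and "expectation (\<lambda>x. centered h q (X i x) / S x) < 0"
proof -
  define T where "T x = (\<Sum>j\<in>{1..n} - {i}. X j x)" for x
  define G where "G t = 1 / (h + max 0 t)" for t :: real
  have [measurable]: "X i \<in> borel_measurable M" using i by simp
  have [measurable]: "S \<in> borel_measurable M" unfolding S_def by (intro borel_measurable_sum) auto
  have S: "S x = X i x + T x" for x unfolding S_def T_def using i by (subst sum.remove[of _ i]) auto
  have ind: "indep_var borel (\<lambda>x. centered h q (X i x)) borel T"
  proof -
    have "indep_var borel (X i) borel T"
      unfolding T_def using i by (intro indep_vars_sum indep_vars_subset[OF indep]) auto
    from indep_var_compose[OF this centered_measurable measurable_id] show ?thesis by (simp add: comp_def)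
  qed
  have ae: "AE x in M. centered h q (X i x) / S x \<le> centered h q (X i x) * G (T x)
              \<and> (h < X i x \<longrightarrow> centered h q (X i x) / S x < centered h q (X i x) * G (T x))
              \<and> \<bar>centered h q (X i x) / S x\<bar> \<le> 1 + q"
    using positive_copies[OF pos]
  proof eventually_elim
    case (elim x)
    have u: "0 < X i x" using elim i by simp
    have "0 \<le> X j x" if "j \<in> {1..n} - {i}" for j using elim that by (simp add: less_imp_le)
    then have s: "0 \<le> T x" unfolding T_def by (rule sum_nonneg)
    have G_eq: "centered h q (X i x) * G (T x) = centered h q (X i x) / (h + T x)"
      using s by (simp add: G_def)
    show ?case
      unfolding G_eq S using centered_ratio_bound[OF u s h q] by blast
  qed
  show int_ratio: "integrable M (\<lambda>x. centered h q (X i x) / S x)"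
    using ae by (intro integrable_const_bound[where B="1 + q"]) (auto elim: eventually_mono)
  have G_bound: "\<bar>G t\<bar> \<le> 1 / h" for t unfolding G_def using h by (auto simp: field_simps)
  have G_meas: "G \<in> borel_measurable borel" unfolding G_def by measurable
  have below: "AE x in M. centered h q (X i x) / S x \<le> centered h q (X i x) * G (T x)"
    using ae by eventually_elim blast
  have strictly_below: "AE x in M. x \<in> {x\<in>space M. h < X i x}
                       \<longrightarrow> centered h q (X i x) / S x < centered h q (X i x) * G (T x)"
    using ae by eventually_elim blast
  have A: "{x\<in>space M. h < X i x} \<in> sets M" by measurable
  have C: "integrable M (\<lambda>x. centered h q (X i x))" "expectation (\<lambda>x. centered h q (X i x)) = 0"
    using centered_copy_mean_zero[OF int q(1) mean] i by auto
  have "prob {x\<in>space M. h < X i x} = prob {x\<in>space M. h < Y x}"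
    using measure_eq_distr[OF X_meas Y_meas _ X_distr, of i "{h<..}"] i by simp
  then have "prob {x\<in>space M. h < X i x} \<noteq> 0" using tail by simp
  then show "expectation (\<lambda>x. centered h q (X i x) / S x) < 0"
    by (rule expectation_negative_by_decoupling[OF ind C G_meas G_bound int_ratio below A _ strictly_below])
qed

lemma expectation_kappa_hat_less:
  assumes pos: "AE x in M. 0 < Y x" and int: "integrable M Y" and h: "0 < h"
    and q: "0 \<le> q" "q < 1" and mean: "expectation (\<lambda>x. excess_part h (Y x)) = q * expectation Y"
    and tail: "0 < prob {x\<in>space M. Y x > h}" and n: "1 \<le> n"
  shows "expectation (kappa_hat X h n) < q"
proof -
  let ?R = "\<lambda>i x. centered h q (X i x) / (\<Sum>j\<in>{1..n}. X j x)"
  note negative = centered_ratio_expectation_negative[OF pos int h q mean tail]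
  have sum_eq: "expectation (\<lambda>x. \<Sum>i\<in>{1..n}. ?R i x) = (\<Sum>i\<in>{1..n}. expectation (?R i))"
    by (rule Bochner_Integration.integral_sum, rule negative(1))
  have "AE x in M. kappa_hat X h n x = q + (\<Sum>i\<in>{1..n}. ?R i x)"
    using positive_copies[OF pos] by eventually_elim (intro kappa_hat_decomposition n; auto)
  then have "expectation (kappa_hat X h n) = expectation (\<lambda>x. q + (\<Sum>i\<in>{1..n}. ?R i x))"
    by (intro integral_cong_AE kappa_hat_measurable) (use negative(1) in auto)
  also have "\<dots> = q + (\<Sum>i\<in>{1..n}. expectation (?R i))"
    using negative(1) by (subst Bochner_Integration.integral_add) (auto simp: prob_space sum_eq)
  also have "\<dots> < q + (\<Sum>i\<in>{1..n}. 0)"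
    using negative(2) n by (intro add_strict_left_mono sum_strict_mono) auto
  finally show ?thesis by simp
qed

end

theorem theorem2:
  fixes M :: "'a measure" and Y :: "'a \<Rightarrow> real" and X :: "nat \<Rightarrow> 'a \<Rightarrow> real" and h :: real
  assumes "prob_space M"
    and "Y \<in> borel_measurable M"
    and "AE x in M. Y x > 0"
    and "integrable M Y"
    and "h > 0"
    and "0 < measure M {x\<in>space M. Y x > h}" and "measure M {x\<in>space M. Y x > h} < 1"
    and "prob_space.indep_vars M (\<lambda>_. borel) X {1..}"
    and "\<And>i. i \<ge> 1 \<Longrightarrow> X i \<in> borel_measurable M"
    and "\<And>i. i \<ge> 1 \<Longrightarrow> distr M borel (X i) = distr M borel Y"
  shows "(\<forall>n\<ge>1. (\<integral>\<omega>. kappa_hat X h n \<omega> \<partial>M) < kappa M Y h)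
       \<and> (AE \<omega> in M. (\<lambda>n. kappa_hat X h n \<omega>) \<longlonglongrightarrow> kappa M Y h)
       \<and> (\<forall>\<epsilon>>0. (\<lambda>n. measure M {\<omega>\<in>space M. \<bar>kappa_hat X h n \<omega> - kappa M Y h\<bar> > \<epsilon>})
                    \<longlonglongrightarrow> 0)"
proof -
  interpret iid_sample M X Y
    using assms(1,2,8-10) by (intro iid_sample.intro iid_sample_axioms.intro) auto
  have kappa: "kappa M Y h = expectation (\<lambda>x. excess_part h (Y x)) / expectation Y"
    "0 \<le> kappa M Y h" "kappa M Y h < 1"
    using kappa_facts[OF assms(2-5,7)] by auto
  have mean: "expectation (\<lambda>x. excess_part h (Y x)) = kappa M Y h * expectation Y"
    using kappa(1) expectation_pos[OF assms(3,4)] by simp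
  have bias: "\<forall>n\<ge>1. (\<integral>\<omega>. kappa_hat X h n \<omega> \<partial>M) < kappa M Y h"
    using expectation_kappa_hat_less[OF assms(3-5) kappa(2,3) mean assms(6)] by blast
  have consistent: "AE \<omega> in M. (\<lambda>n. kappa_hat X h n \<omega>) \<longlonglongrightarrow> kappa M Y h"
    using kappa_hat_tendsto[OF assms(3-5)] unfolding kappa(1) .
  have "\<forall>\<epsilon>>0. (\<lambda>n. measure M {\<omega>\<in>space M. \<bar>kappa_hat X h n \<omega> - kappa M Y h\<bar> > \<epsilon>}) \<longlonglongrightarrow> 0"
    using AE_tendsto_imp_tendsto_in_prob[OF kappa_hat_measurable consistent] by blast
  with bias consistent show ?thesis by blast
qed
end
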